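(* Let $\delta\in(0,1)$ and let $S \subset [p]$ with $|S| = s$ satisfy $M(S) := |S \triangle S^\star|/2 \ge \delta s$, where $S^\star = \operatorname{supp}(\beta^\star)$. Let $\Delta(S) := \|Y - X\mathbb{1}_S\|_2^2 - \|Y - X\mathbb{1}_{S^\star}\|_2^2$. Then $$ \mathbb{P}(\Delta(S) \le 0) \le \left(1 + \frac{\delta(2\sigma_2^2 - \sigma_1^2) s}{2\sigma_2^4}\right)^{-n_1/2}\left(1 + \frac{\delta s}{2\sigma_2^2}\right)^{-n_2/2}. $$
   Context: Sample sizes $n_1,n_2\ge1$, $n = n_1+n_2$. $X\in\mathbb{R}^{n\times p}$ has i.i.d. $\mathcal{N}(0,1)$ entries; $0<\sigma_1^2<\sigma_2^2$; $\Sigma = \begin{pmatrix} \sigma_1 I_{n_1} & 0 \\ 0 & \sigma_2 I_{n_2}\end{pmatrix}$; $W\sim\mathcal{N}(0,I_n)$ independent of $X$; $Z = \Sigma W$; $Y = X\beta^\star + Z$ with $\beta^\star\in\{0,1\}^p$ deterministic having exactly $s$ ones. For $S\subset[p]$, $\mathbb{1}_S\in\{0,1\}^p$ is the indicator vector of $S$. $A\triangle B = (A\cup B)\setminus(A\cap B)$. *)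

theory Defs
  imports "HOL-Probability.Probability"
begin

definition std_gauss :: "real measure" where
  "std_gauss = density lborel std_normal_density"

text \<open>Index set of the independent standard Gaussians: entries X_ij (i<n, j<p) as Inl (i,j)
  and entries W_i (i<n) as Inr i.\<close>
definition gidx :: "nat \<Rightarrow> nat \<Rightarrow> (nat \<times> nat + nat) set" where
  "gidx n p = Inl ` ({0..<n} \<times> {0..<p}) \<union> Inr ` {0..<n}"

definition gauss_model :: "nat \<Rightarrow> nat \<Rightarrow> ((nat \<times> nat + nat) \<Rightarrow> real) measure" where
  "gauss_model n p = (\<Pi>\<^sub>M k\<in>gidx n p. std_gauss)"

definition Xmat :: "((nat \<times> nat + nat) \<Rightarrow> real) \<Rightarrow> nat \<Rightarrow> nat \<Rightarrow> real" where
  "Xmat \<omega> i j = \<omega> (Inl (i, j))"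

definition Wvec :: "((nat \<times> nat + nat) \<Rightarrow> real) \<Rightarrow> nat \<Rightarrow> real" where
  "Wvec \<omega> i = \<omega> (Inr i)"

definition Zvec :: "nat \<Rightarrow> real \<Rightarrow> real \<Rightarrow> ((nat \<times> nat + nat) \<Rightarrow> real) \<Rightarrow> nat \<Rightarrow> real" where
  "Zvec n1 \<sigma>1 \<sigma>2 \<omega> i = (if i < n1 then \<sigma>1 else \<sigma>2) * Wvec \<omega> i"

definition Yvec :: "nat \<Rightarrow> nat \<Rightarrow> real \<Rightarrow> real \<Rightarrow> (nat \<Rightarrow> real) \<Rightarrow> ((nat \<times> nat + nat) \<Rightarrow> real) \<Rightarrow> nat \<Rightarrow> real" where
  "Yvec n1 p \<sigma>1 \<sigma>2 \<beta> \<omega> i = (\<Sum>j<p. Xmat \<omega> i j * \<beta> j) + Zvec n1 \<sigma>1 \<sigma>2 \<omega> i"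

definition ind :: "nat set \<Rightarrow> nat \<Rightarrow> real" where
  "ind S j = (if j \<in> S then 1 else 0)"

definition resid :: "nat \<Rightarrow> nat \<Rightarrow> (nat \<Rightarrow> real) \<Rightarrow> ((nat \<times> nat + nat) \<Rightarrow> real) \<Rightarrow> (nat \<Rightarrow> real) \<Rightarrow> real" where
  "resid n p Y \<omega> b = (\<Sum>i<n. (Y i - (\<Sum>j<p. Xmat \<omega> i j * b j))\<^sup>2)"

definition supp :: "nat \<Rightarrow> (nat \<Rightarrow> real) \<Rightarrow> nat set" where
  "supp p \<beta> = {j. j < p \<and> \<beta> j \<noteq> 0}"

end

theory Submission
  imports Defs
begin

text \<open>Chernoff bound: P(Delta <= 0) <= E exp(-t Delta) for every t >= 0. Row i contributes
  (u_i + z_i)^2 - z_i^2 to Delta, where u_i = <X_i, 1_S* - 1_S> and the noise z_i = sigma_i W_i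
  depend on disjoint sets of independent coordinates, so the Laplace transform factorises over
  the rows. Integrating out W_i leaves E exp(-c_i u_i^2) with c_i = t - 2 t^2 sigma_i^2, and
  since u_i is centred Gaussian with variance |S triangle S*| >= 2 delta s this is
  (1 + 2 c_i |S triangle S*|)^(-1/2). The choice t = 1/(4 sigma_2^2) gives the two rates.\<close>

lemma measurable_PiM_superset:
  assumes "K \<subseteq> I" and "g \<in> measurable (PiM K M) N"
    and "\<And>\<omega> \<omega>'. (\<And>k. k \<in> K \<Longrightarrow> \<omega> k = \<omega>' k) \<Longrightarrow> g \<omega> = g \<omega>'"
  shows "g \<in> measurable (PiM I M) N"
proof -
  have "g = (\<lambda>\<omega>. g (restrict \<omega> K))" by (rule ext, rule assms(3)) simp
  also have "\<dots> \<in> measurable (PiM I M) N"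
    by (rule measurable_compose[OF measurable_restrict_subset[OF assms(1)] assms(2)])
  finally show ?thesis .
qed

lemma (in product_sigma_finite) product_nn_integral_prod_blocks:
  fixes R :: "nat \<Rightarrow> 'i set" and g :: "nat \<Rightarrow> ('i \<Rightarrow> 'a) \<Rightarrow> ennreal"
  assumes "\<And>i. i < n \<Longrightarrow> finite (R i)" and "disjoint_family_on R {..<n}"
    and "\<And>i. i < n \<Longrightarrow> g i \<in> borel_measurable (PiM (R i) M)"
    and "\<And>i \<omega> \<omega>'. i < n \<Longrightarrow> (\<And>k. k \<in> R i \<Longrightarrow> \<omega> k = \<omega>' k) \<Longrightarrow> g i \<omega> = g i \<omega>'"
  shows "(\<integral>\<^sup>+\<omega>. (\<Prod>i<n. g i \<omega>) \<partial>PiM (\<Union>i<n. R i) M) = (\<Prod>i<n. \<integral>\<^sup>+\<omega>. g i \<omega> \<partial>PiM (R i) M)"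
  using assms
proof (induction n)
  case 0
  show ?case by (simp add: PiM_empty nn_integral_count_space_finite)
next
  case (Suc n)
  define I where "I = (\<Union>i<n. R i)"
  have "R i \<inter> R n = {}" if "i < n" for i
    using that by (intro disjoint_family_onD[OF Suc.prems(2)]) auto
  then have disj: "I \<inter> R n = {}" by (auto simp: I_def)
  have fin: "finite I" "finite (R n)" using Suc.prems(1) by (auto simp: I_def)
  have meas: "g i \<in> borel_measurable (PiM L M)" if "i < Suc n" and "R i \<subseteq> L" for i L
    using that by (intro measurable_PiM_superset[OF _ Suc.prems(3)] Suc.prems(4)) auto
  have merge: "(\<Prod>i<Suc n. g i (merge I (R n) (x, y))) = (\<Prod>i<n. g i x) * g n y" for x y
  proof -
    have "g i (merge I (R n) (x, y)) = g i x" if "i < n" for i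
      using that by (intro Suc.prems(4) merge_apply(1)[OF disj]) (auto simp: I_def)
    moreover have "g n (merge I (R n) (x, y)) = g n y"
      by (intro Suc.prems(4) merge_apply(2)[OF disj]) auto
    ultimately show ?thesis by (simp add: prod.lessThan_Suc)
  qed
  have "(\<integral>\<^sup>+\<omega>. (\<Prod>i<Suc n. g i \<omega>) \<partial>PiM (\<Union>i<Suc n. R i) M)
      = (\<integral>\<^sup>+x. \<integral>\<^sup>+y. (\<Prod>i<n. g i x) * g n y \<partial>PiM (R n) M \<partial>PiM I M)"
  proof -
    have "(\<Union>i<Suc n. R i) = I \<union> R n" by (auto simp: I_def lessThan_Suc)
    moreover have "(\<lambda>\<omega>. \<Prod>i<Suc n. g i \<omega>) \<in> borel_measurable (PiM (I \<union> R n) M)"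
      by (intro borel_measurable_prod_ennreal meas) (auto simp: I_def less_Suc_eq)
    ultimately show ?thesis
      using disj fin by (simp add: product_nn_integral_fold merge del: prod.lessThan_Suc)
  qed
  also have "\<dots> = (\<integral>\<^sup>+x. (\<Prod>i<n. g i x) \<partial>PiM I M) * (\<integral>\<^sup>+y. g n y \<partial>PiM (R n) M)"
  proof -
    have "(\<lambda>x. \<Prod>i<n. g i x) \<in> borel_measurable (PiM I M)"
      by (intro borel_measurable_prod_ennreal meas) (auto simp: I_def)
    then show ?thesis
      using Suc.prems(3)[of n] by (simp add: nn_integral_cmult nn_integral_multc)
  qed
  moreover have "(\<integral>\<^sup>+x. (\<Prod>i<n. g i x) \<partial>PiM I M) = (\<Prod>i<n. \<integral>\<^sup>+\<omega>. g i \<omega> \<partial>PiM (R i) M)"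
    unfolding I_def
  proof (rule Suc.IH)
    show "disjoint_family_on R {..<n}"
      using Suc.prems(2) by (rule disjoint_family_on_mono[rotated]) auto
    show "g i \<omega> = g i \<omega>'" if "i < n" and "\<And>k. k \<in> R i \<Longrightarrow> \<omega> k = \<omega>' k" for i \<omega> \<omega>'
      using that by (intro Suc.prems(4)) auto
  qed (use Suc.prems(1,3) in auto)
  ultimately show ?case by (simp add: prod.lessThan_Suc)
qed

lemma emeasure_nonpos_le_nn_integral_exp:
  fixes f :: "'a \<Rightarrow> real"
  assumes "t \<ge> 0"
  shows "emeasure M {\<omega> \<in> space M. f \<omega> \<le> 0} \<le> (\<integral>\<^sup>+\<omega>. exp (- t * f \<omega>) \<partial>M)"
proof (cases "{\<omega> \<in> space M. f \<omega> \<le> 0} \<in> sets M")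
  case True
  have "1 \<le> exp (- t * f \<omega>)" if "f \<omega> \<le> 0" for \<omega>
    using assms that by (simp add: mult_nonneg_nonpos)
  then have "indicator {\<omega> \<in> space M. f \<omega> \<le> 0} \<omega> \<le> ennreal (exp (- t * f \<omega>))" for \<omega>
    by (simp add: indicator_def)
  then show ?thesis
    using True by (simp add: nn_integral_mono flip: nn_integral_indicator)
qed (simp add: emeasure_notin_sets)

lemma prob_space_std_gauss: "prob_space std_gauss"
  unfolding std_gauss_def by (auto intro: prob_space_normal_density)

lemma sets_std_gauss [measurable_cong]: "sets std_gauss = sets borel"
  by (simp add: std_gauss_def)

lemma product_sigma_finite_std_gauss: "product_sigma_finite (\<lambda>_. std_gauss)"
  unfolding product_sigma_finite_def
  using prob_space_std_gauss prob_space_imp_sigma_finite by blast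

lemma borel_measurable_PiM_std_gauss_linear [measurable]:
  "J \<subseteq> I \<Longrightarrow> (\<lambda>x. \<Sum>j\<in>J. v j * x j) \<in> borel_measurable (PiM I (\<lambda>_. std_gauss))"
  by measurable auto

lemma nn_integral_std_gauss_exp_quadratic:
  fixes \<alpha> \<beta> :: real
  assumes "\<alpha> < 1/2"
  shows "(\<integral>\<^sup>+x. exp (\<alpha> * x\<^sup>2 + \<beta> * x) \<partial>std_gauss)
       = ennreal (exp (\<beta>\<^sup>2 / (2 * (1 - 2 * \<alpha>))) / sqrt (1 - 2 * \<alpha>))"
proof -
  define A where "A = 1 - 2 * \<alpha>"
  have A: "A > 0" using assms by (simp add: A_def)
  define K where "K = exp (\<beta>\<^sup>2 / (2 * A)) / sqrt A"
  have K: "K \<ge> 0" using A by (simp add: K_def)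
  \<comment> \<open>completing the square: the integrand is K times the density of N(\<beta>/A, 1/A)\<close>
  have density: "std_normal_density x * exp (\<alpha> * x\<^sup>2 + \<beta> * x) = K * normal_density (\<beta> / A) (1 / sqrt A) x"
    for x
  proof -
    let ?E = "- (x - \<beta> / A)\<^sup>2 * A / 2"
    have exponent: "- x\<^sup>2 / 2 + (\<alpha> * x\<^sup>2 + \<beta> * x) = \<beta>\<^sup>2 / (2 * A) + ?E"
      using A by (simp add: field_simps power2_eq_square) (simp add: A_def algebra_simps)
    have "std_normal_density x * exp (\<alpha> * x\<^sup>2 + \<beta> * x) = exp (- x\<^sup>2 / 2 + (\<alpha> * x\<^sup>2 + \<beta> * x)) / sqrt (2 * pi)"
      by (simp add: std_normal_density_def mult_exp_exp)
    also have "\<dots> = K * (sqrt A / sqrt (2 * pi) * exp ?E)"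
      unfolding exponent exp_add K_def using A by simp
    also have "sqrt A / sqrt (2 * pi) * exp ?E = normal_density (\<beta> / A) (1 / sqrt A) x"
      using A by (simp add: normal_density_def power_divide real_sqrt_divide)
    finally show ?thesis .
  qed
  have "(\<integral>\<^sup>+x. exp (\<alpha> * x\<^sup>2 + \<beta> * x) \<partial>std_gauss)
      = (\<integral>\<^sup>+x. ennreal K * normal_density (\<beta> / A) (1 / sqrt A) x \<partial>lborel)"
    unfolding std_gauss_def using K
    by (subst nn_integral_density) (auto simp flip: ennreal_mult simp: density intro!: nn_integral_cong)
  also have "\<dots> = ennreal K"
    using A by (subst nn_integral_cmult) (auto simp: nn_integral_eq_integral)
  finally show ?thesis by (simp add: K_def A_def)
qed

lemma nn_integral_std_gauss_exp_linear:
  "(\<integral>\<^sup>+x. exp (\<beta> * x) \<partial>std_gauss) = ennreal (exp (\<beta>\<^sup>2 / 2))"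
  using nn_integral_std_gauss_exp_quadratic[of 0 \<beta>] by simp

lemma nn_integral_std_gauss_exp_neg_square_affine:
  fixes c b u :: real
  assumes "c \<ge> 0"
  shows "(\<integral>\<^sup>+y. exp (- c * (b + u * y)\<^sup>2) \<partial>std_gauss)
       = ennreal (exp (- c / (1 + 2 * c * u\<^sup>2) * b\<^sup>2) / sqrt (1 + 2 * c * u\<^sup>2))"
proof -
  have D: "1 + 2 * c * u\<^sup>2 > 0" using assms by (simp add: add_pos_nonneg)
  have "(\<integral>\<^sup>+y. exp (- c * (b + u * y)\<^sup>2) \<partial>std_gauss)
      = (\<integral>\<^sup>+y. ennreal (exp (- c * b\<^sup>2)) * exp ((- c * u\<^sup>2) * y\<^sup>2 + (- 2 * c * b * u) * y) \<partial>std_gauss)"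
    by (intro nn_integral_cong)
       (simp add: mult_exp_exp power2_eq_square algebra_simps flip: ennreal_mult)
  also have "\<dots> = ennreal (exp (- c * b\<^sup>2)) * (\<integral>\<^sup>+y. exp ((- c * u\<^sup>2) * y\<^sup>2 + (- 2 * c * b * u) * y) \<partial>std_gauss)"
    by (rule nn_integral_cmult) simp
  also have "\<dots> = ennreal (exp (- c * b\<^sup>2) * (exp ((- 2 * c * b * u)\<^sup>2 / (2 * (1 + 2 * c * u\<^sup>2))) / sqrt (1 + 2 * c * u\<^sup>2)))"
    using D by (subst nn_integral_std_gauss_exp_quadratic) (auto simp: algebra_simps simp flip: ennreal_mult)
  also have "exp (- c * b\<^sup>2) * (exp ((- 2 * c * b * u)\<^sup>2 / (2 * (1 + 2 * c * u\<^sup>2))) / sqrt (1 + 2 * c * u\<^sup>2))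
      = exp (- c / (1 + 2 * c * u\<^sup>2) * b\<^sup>2) / sqrt (1 + 2 * c * u\<^sup>2)"
    using D by (simp add: mult_exp_exp field_simps power2_eq_square)
  finally show ?thesis .
qed

lemma nn_integral_PiM_std_gauss_exp_neg_square_linear:
  fixes J :: "'i set" and v :: "'i \<Rightarrow> real"
  assumes "finite J" and "c \<ge> 0"
  shows "(\<integral>\<^sup>+x. exp (- c * (b + (\<Sum>j\<in>J. v j * x j))\<^sup>2) \<partial>PiM J (\<lambda>_. std_gauss))
       = ennreal (exp (- c / (1 + 2 * c * (\<Sum>j\<in>J. (v j)\<^sup>2)) * b\<^sup>2) / sqrt (1 + 2 * c * (\<Sum>j\<in>J. (v j)\<^sup>2)))"
  using assms
proof (induction J arbitrary: b c rule: finite_induct)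
  case empty
  then show ?case by (simp add: PiM_empty nn_integral_count_space_finite)
next
  case (insert i J b c)
  interpret product_sigma_finite "\<lambda>_. std_gauss" by (rule product_sigma_finite_std_gauss)
  define V where "V = (\<Sum>j\<in>J. (v j)\<^sup>2)"
  have V_nonneg: "V \<ge> 0" by (simp add: V_def sum_nonneg)
  define D where "D = 1 + 2 * c * (v i)\<^sup>2"
  define c' where "c' = c / D"
  have D: "D > 0" using insert by (simp add: D_def add_pos_nonneg)
  have c': "c' \<ge> 0" using D insert by (simp add: c'_def)
  have upd: "(\<Sum>j\<in>J. v j * (x(i := y)) j) = (\<Sum>j\<in>J. v j * x j)" for x :: "'i \<Rightarrow> real" and y
    using insert by (intro sum.cong) auto
  have "(\<integral>\<^sup>+x. exp (- c * (b + (\<Sum>j\<in>insert i J. v j * x j))\<^sup>2) \<partial>PiM (insert i J) (\<lambda>_. std_gauss))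
     = (\<integral>\<^sup>+x. \<integral>\<^sup>+y. exp (- c * ((b + (\<Sum>j\<in>J. v j * x j)) + v i * y)\<^sup>2) \<partial>std_gauss \<partial>PiM J (\<lambda>_. std_gauss))"
    using insert by (subst product_nn_integral_insert) (simp_all add: upd fun_upd_same algebra_simps del: fun_upd_apply)
  also have "\<dots> = (\<integral>\<^sup>+x. ennreal (1 / sqrt D) * exp (- c' * (b + (\<Sum>j\<in>J. v j * x j))\<^sup>2) \<partial>PiM J (\<lambda>_. std_gauss))"
    using insert by (intro nn_integral_cong, subst nn_integral_std_gauss_exp_neg_square_affine)
      (simp_all add: D_def c'_def flip: ennreal_mult)
  also have "\<dots> = ennreal (1 / sqrt D) * ennreal (exp (- c' / (1 + 2 * c' * V) * b\<^sup>2) / sqrt (1 + 2 * c' * V))"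
    using insert c' by (subst nn_integral_cmult) (simp_all add: V_def)
  also have "\<dots> = ennreal (exp (- c / (1 + 2 * c * (\<Sum>j\<in>insert i J. (v j)\<^sup>2)) * b\<^sup>2) / sqrt (1 + 2 * c * (\<Sum>j\<in>insert i J. (v j)\<^sup>2)))"
  proof -
    have prod_eq: "D * (1 + 2 * c' * V) = 1 + 2 * c * (\<Sum>j\<in>insert i J. (v j)\<^sup>2)"
      using insert D by (simp add: D_def c'_def V_def field_simps)
    have "c' / (1 + 2 * c' * V) = c / (D * (1 + 2 * c' * V))"
      using D by (simp add: c'_def)
    moreover have "sqrt D * sqrt (1 + 2 * c' * V) = sqrt (D * (1 + 2 * c' * V))"
      by (simp add: real_sqrt_mult)
    ultimately show ?thesis
      using D c' V_nonneg by (simp add: prod_eq flip: ennreal_mult)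
  qed
  finally show ?case .
qed

lemma nn_integral_PiM_std_gauss_row:
  fixes J :: "'i set" and r :: 'i and v :: "'i \<Rightarrow> real"
  assumes "finite J" and "r \<notin> J" and "t - 2 * t\<^sup>2 * \<sigma>\<^sup>2 \<ge> 0"
  shows "(\<integral>\<^sup>+\<omega>. exp (- t * (((\<Sum>j\<in>J. v j * \<omega> j) + \<sigma> * \<omega> r)\<^sup>2 - (\<sigma> * \<omega> r)\<^sup>2))
            \<partial>PiM (insert r J) (\<lambda>_. std_gauss))
       = ennreal (1 / sqrt (1 + 2 * (t - 2 * t\<^sup>2 * \<sigma>\<^sup>2) * (\<Sum>j\<in>J. (v j)\<^sup>2)))"
proof -
  interpret product_sigma_finite "\<lambda>_. std_gauss" by (rule product_sigma_finite_std_gauss)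
  define c where "c = t - 2 * t\<^sup>2 * \<sigma>\<^sup>2"
  have upd: "(\<Sum>j\<in>J. v j * (x(r := y)) j) = (\<Sum>j\<in>J. v j * x j)" for x :: "'i \<Rightarrow> real" and y
    using assms by (intro sum.cong) auto
  \<comment> \<open>integrating out the noise coordinate turns the cross term into a Gaussian factor\<close>
  have noise: "(\<integral>\<^sup>+y. exp (- t * ((u + \<sigma> * y)\<^sup>2 - (\<sigma> * y)\<^sup>2)) \<partial>std_gauss) = exp (- c * u\<^sup>2)"
    for u :: real
  proof -
    have "(\<integral>\<^sup>+y. exp (- t * ((u + \<sigma> * y)\<^sup>2 - (\<sigma> * y)\<^sup>2)) \<partial>std_gauss)
        = (\<integral>\<^sup>+y. ennreal (exp (- t * u\<^sup>2)) * exp ((- 2 * t * \<sigma> * u) * y) \<partial>std_gauss)"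
      by (intro nn_integral_cong) (simp add: mult_exp_exp power2_eq_square algebra_simps flip: ennreal_mult)
    also have "\<dots> = ennreal (exp (- t * u\<^sup>2) * exp ((- 2 * t * \<sigma> * u)\<^sup>2 / 2))"
      by (subst nn_integral_cmult, simp, subst nn_integral_std_gauss_exp_linear) (simp add: ennreal_mult)
    also have "exp (- t * u\<^sup>2) * exp ((- 2 * t * \<sigma> * u)\<^sup>2 / 2) = exp (- c * u\<^sup>2)"
      by (simp add: c_def mult_exp_exp power2_eq_square algebra_simps)
    finally show ?thesis .
  qed
  have "(\<integral>\<^sup>+\<omega>. exp (- t * (((\<Sum>j\<in>J. v j * \<omega> j) + \<sigma> * \<omega> r)\<^sup>2 - (\<sigma> * \<omega> r)\<^sup>2))
            \<partial>PiM (insert r J) (\<lambda>_. std_gauss))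
      = (\<integral>\<^sup>+x. \<integral>\<^sup>+y. exp (- t * (((\<Sum>j\<in>J. v j * x j) + \<sigma> * y)\<^sup>2 - (\<sigma> * y)\<^sup>2)) \<partial>std_gauss
            \<partial>PiM J (\<lambda>_. std_gauss))"
    using assms by (subst product_nn_integral_insert) (simp_all add: upd fun_upd_same del: fun_upd_apply)
  also have "\<dots> = (\<integral>\<^sup>+x. exp (- c * (\<Sum>j\<in>J. v j * x j)\<^sup>2) \<partial>PiM J (\<lambda>_. std_gauss))"
    by (simp only: noise)
  also have "\<dots> = ennreal (1 / sqrt (1 + 2 * c * (\<Sum>j\<in>J. (v j)\<^sup>2)))"
    using assms nn_integral_PiM_std_gauss_exp_neg_square_linear[of J c 0 v] by (simp add: c_def)
  finally show ?thesis by (simp add: c_def)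
qed

definition row_idx :: "nat \<Rightarrow> nat \<Rightarrow> (nat \<times> nat + nat) set" where
  "row_idx p i = insert (Inr i) ((\<lambda>j. Inl (i, j)) ` {..<p})"

lemma gidx_eq_UN_row_idx: "gidx n p = (\<Union>i<n. row_idx p i)"
  by (auto simp: gidx_def row_idx_def)

lemma nn_integral_gauss_model_exp_residual_gap:
  fixes v \<sigma> :: "nat \<Rightarrow> real"
  assumes "\<And>i. i < n \<Longrightarrow> t - 2 * t\<^sup>2 * (\<sigma> i)\<^sup>2 \<ge> 0"
  shows "(\<integral>\<^sup>+\<omega>. exp (- t * (\<Sum>i<n. ((\<Sum>j<p. Xmat \<omega> i j * v j) + \<sigma> i * Wvec \<omega> i)\<^sup>2 - (\<sigma> i * Wvec \<omega> i)\<^sup>2))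
            \<partial>gauss_model n p)
       = (\<Prod>i<n. ennreal (1 / sqrt (1 + 2 * (t - 2 * t\<^sup>2 * (\<sigma> i)\<^sup>2) * (\<Sum>j<p. (v j)\<^sup>2))))"
proof -
  interpret product_sigma_finite "\<lambda>_. std_gauss" by (rule product_sigma_finite_std_gauss)
  define w :: "nat \<times> nat + nat \<Rightarrow> real" where "w = case_sum (\<lambda>(_, j). v j) (\<lambda>_. 0)"
  define J :: "nat \<Rightarrow> (nat \<times> nat + nat) set" where "J i = (\<lambda>j. Inl (i, j)) ` {..<p}" for i
  define g where "g i \<omega> = ennreal (exp (- t * (((\<Sum>k\<in>J i. w k * \<omega> k) + \<sigma> i * \<omega> (Inr i))\<^sup>2 - (\<sigma> i * \<omega> (Inr i))\<^sup>2)))"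
    for i \<omega>
  have row_idx: "row_idx p i = insert (Inr i) (J i)" and fin: "finite (J i)" and "Inr i \<notin> J i" for i
    by (auto simp: row_idx_def J_def)
  have inj: "inj_on (\<lambda>j. Inl (i, j) :: nat \<times> nat + nat) {..<p}" for i
    by (simp add: inj_on_def)
  have row_sum: "(\<Sum>k\<in>J i. w k * \<omega> k) = (\<Sum>j<p. Xmat \<omega> i j * v j)" for i \<omega>
    by (simp add: J_def w_def Xmat_def sum.reindex[OF inj] mult.commute)
  have row_norm: "(\<Sum>k\<in>J i. (w k)\<^sup>2) = (\<Sum>j<p. (v j)\<^sup>2)" for i
    by (simp add: J_def w_def sum.reindex[OF inj])
  have "(\<integral>\<^sup>+\<omega>. exp (- t * (\<Sum>i<n. ((\<Sum>j<p. Xmat \<omega> i j * v j) + \<sigma> i * Wvec \<omega> i)\<^sup>2 - (\<sigma> i * Wvec \<omega> i)\<^sup>2))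
            \<partial>gauss_model n p)
      = (\<integral>\<^sup>+\<omega>. (\<Prod>i<n. g i \<omega>) \<partial>PiM (\<Union>i<n. row_idx p i) (\<lambda>_. std_gauss))"
    by (simp add: gauss_model_def gidx_eq_UN_row_idx g_def row_sum Wvec_def
        sum_distrib_left exp_sum prod_ennreal)
  also have "\<dots> = (\<Prod>i<n. \<integral>\<^sup>+\<omega>. g i \<omega> \<partial>PiM (row_idx p i) (\<lambda>_. std_gauss))"
  proof (rule product_nn_integral_prod_blocks)
    show "disjoint_family_on (row_idx p) {..<n}"
      by (auto simp: disjoint_family_on_def row_idx_def)
    show "g i \<in> borel_measurable (PiM (row_idx p i) (\<lambda>_. std_gauss))" for i
      unfolding g_def row_idx by measurable auto
    show "g i \<omega> = g i \<omega>'" if "\<And>k. k \<in> row_idx p i \<Longrightarrow> \<omega> k = \<omega>' k" for i \<omega> \<omega>'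
      using that unfolding g_def row_idx by (simp cong: sum.cong)
  qed (simp add: row_idx fin)
  also have "\<dots> = (\<Prod>i<n. ennreal (1 / sqrt (1 + 2 * (t - 2 * t\<^sup>2 * (\<sigma> i)\<^sup>2) * (\<Sum>j<p. (v j)\<^sup>2))))"
    using assms fin \<open>\<And>i. Inr i \<notin> J i\<close>
    unfolding g_def row_idx
    by (intro prod.cong refl, subst nn_integral_PiM_std_gauss_row) (simp_all add: row_norm)
  finally show ?thesis .
qed

lemma measure_gauss_model_residual_gap_le:
  fixes v \<sigma> :: "nat \<Rightarrow> real"
  assumes "t \<ge> 0" and "\<And>i. i < n \<Longrightarrow> t - 2 * t\<^sup>2 * (\<sigma> i)\<^sup>2 \<ge> 0"
  shows "measure (gauss_model n p) {\<omega> \<in> space (gauss_model n p).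
           (\<Sum>i<n. ((\<Sum>j<p. Xmat \<omega> i j * v j) + \<sigma> i * Wvec \<omega> i)\<^sup>2 - (\<sigma> i * Wvec \<omega> i)\<^sup>2) \<le> 0}
       \<le> (\<Prod>i<n. 1 / sqrt (1 + 2 * (t - 2 * t\<^sup>2 * (\<sigma> i)\<^sup>2) * (\<Sum>j<p. (v j)\<^sup>2)))"
    (is "measure ?M {\<omega> \<in> space ?M. ?\<Delta> \<omega> \<le> 0} \<le> prod ?F _")
proof -
  have nonneg: "0 \<le> ?F i" if "i < n" for i
    using assms(2)[OF that] by (simp add: sum_nonneg)
  have "emeasure ?M {\<omega> \<in> space ?M. ?\<Delta> \<omega> \<le> 0} \<le> (\<integral>\<^sup>+\<omega>. exp (- t * ?\<Delta> \<omega>) \<partial>?M)"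
    by (rule emeasure_nonpos_le_nn_integral_exp[OF assms(1)])
  also have "\<dots> = (\<Prod>i<n. ennreal (?F i))"
    by (rule nn_integral_gauss_model_exp_residual_gap[OF assms(2)])
  also have "\<dots> = ennreal (prod ?F {..<n})"
    by (rule prod_ennreal, rule nonneg) simp
  finally show ?thesis
    unfolding measure_def by (rule enn2real_leI[rotated]) (rule prod_nonneg, rule nonneg, simp)
qed

lemma resid_diff_eq:
  assumes "\<And>i. i < n \<Longrightarrow> Y i = (\<Sum>j<p. Xmat \<omega> i j * b j) + z i"
  shows "resid n p Y \<omega> b' - resid n p Y \<omega> b
       = (\<Sum>i<n. ((\<Sum>j<p. Xmat \<omega> i j * (b j - b' j)) + z i)\<^sup>2 - (z i)\<^sup>2)"
  unfolding resid_def sum_subtractf[symmetric]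
  using assms by (intro sum.cong) (simp_all add: right_diff_distrib sum_subtractf algebra_simps)

lemma resid_Yvec_diff_eq:
  assumes "\<forall>j<p. \<beta> j \<in> {0, 1}"
  shows "resid n p (Yvec n1 p \<sigma>1 \<sigma>2 \<beta> \<omega>) \<omega> (ind S) - resid n p (Yvec n1 p \<sigma>1 \<sigma>2 \<beta> \<omega>) \<omega> (ind (supp p \<beta>))
       = (\<Sum>i<n. ((\<Sum>j<p. Xmat \<omega> i j * (ind (supp p \<beta>) j - ind S j)) + Zvec n1 \<sigma>1 \<sigma>2 \<omega> i)\<^sup>2
                  - (Zvec n1 \<sigma>1 \<sigma>2 \<omega> i)\<^sup>2)"
proof (rule resid_diff_eq)
  have "(\<Sum>j<p. Xmat \<omega> i j * \<beta> j) = (\<Sum>j<p. Xmat \<omega> i j * ind (supp p \<beta>) j)" for i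
    using assms by (intro sum.cong) (auto simp: ind_def supp_def)
  then show "Yvec n1 p \<sigma>1 \<sigma>2 \<beta> \<omega> i = (\<Sum>j<p. Xmat \<omega> i j * ind (supp p \<beta>) j) + Zvec n1 \<sigma>1 \<sigma>2 \<omega> i" for i
    by (simp add: Yvec_def)
qed

lemma sum_ind_diff_square:
  assumes "A \<subseteq> {..<p}" and "B \<subseteq> {..<p}"
  shows "(\<Sum>j<p. (ind A j - ind B j)\<^sup>2) = real (card (sym_diff A B))"
proof -
  define C where "C = sym_diff A B"
  have "(\<Sum>j<p. (ind A j - ind B j)\<^sup>2) = (\<Sum>j<p. of_bool (j \<in> C))"
    by (intro sum.cong) (auto simp: ind_def C_def)
  also have "\<dots> = real (card ({..<p} \<inter> C))"
    by simp
  also have "{..<p} \<inter> C = C"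
    using assms by (auto simp: C_def)
  finally show ?thesis by (simp add: C_def)
qed

lemma prod_lessThan_add_if: "(\<Prod>i<m + n. if i < m then x else y) = x ^ m * y ^ n"
proof (induction n)
  case 0
  have "(\<Prod>i<m. if i < m then x else y) = (\<Prod>i<m. x)" by (rule prod.cong) auto
  then show ?case by simp
next
  case (Suc n)
  then show ?case by (simp add: mult_ac)
qed

lemma inv_sqrt_power_le_powr:
  fixes B X :: real
  assumes "0 < B" and "B \<le> X"
  shows "(1 / sqrt X) ^ n \<le> B powr (- (real n / 2))"
proof -
  have "(1 / sqrt X) ^ n = (X powr (- (1 / 2))) ^ n"
    using assms by (simp add: powr_minus_divide powr_half_sqrt)
  also have "\<dots> = X powr (- (real n / 2))"
    using assms by (simp add: powr_power)
  also have "\<dots> \<le> B powr (- (real n / 2))"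
    using assms by (intro powr_mono2') simp_all
  finally show ?thesis .
qed

lemma chernoff_factor_le:
  fixes \<sigma> q a \<delta> s :: real
  assumes "0 < \<sigma>\<^sup>2" and "q \<le> 2 * \<sigma>\<^sup>2" and "0 \<le> \<delta> * s" and "2 * \<delta> * s \<le> a"
  defines "t \<equiv> 1 / (4 * \<sigma>\<^sup>2)"
  shows "(1 / sqrt (1 + 2 * (t - 2 * t\<^sup>2 * q) * a)) ^ n
       \<le> (1 + \<delta> * (2 * \<sigma>\<^sup>2 - q) * s / (2 * \<sigma> ^ 4)) powr (- (real n / 2))"
proof (rule inv_sqrt_power_le_powr)
  have \<sigma>: "\<sigma> \<noteq> 0" and \<sigma>4: "\<sigma> ^ 4 = (\<sigma>\<^sup>2)\<^sup>2"
    using assms(1) by auto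
  define c where "c = (2 * \<sigma>\<^sup>2 - q) / (8 * \<sigma> ^ 4)"
  have c_nonneg: "0 \<le> c"
    using assms(2) by (simp add: c_def)
  have rate: "t - 2 * t\<^sup>2 * q = c"
    using \<sigma> unfolding t_def c_def \<sigma>4 by (simp add: field_simps power2_eq_square)
  have lhs: "\<delta> * (2 * \<sigma>\<^sup>2 - q) * s / (2 * \<sigma> ^ 4) = 2 * c * (2 * \<delta> * s)"
    using \<sigma> by (simp add: c_def field_simps)
  show "1 + \<delta> * (2 * \<sigma>\<^sup>2 - q) * s / (2 * \<sigma> ^ 4) \<le> 1 + 2 * (t - 2 * t\<^sup>2 * q) * a"
    unfolding lhs rate using c_nonneg assms(4) by (intro add_left_mono mult_left_mono) simp_all
  show "0 < 1 + \<delta> * (2 * \<sigma>\<^sup>2 - q) * s / (2 * \<sigma> ^ 4)"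
    unfolding lhs using c_nonneg assms(3) by (simp add: add_pos_nonneg)
qed

theorem proposition2:
  fixes n1 n2 p s :: nat and \<sigma>1 \<sigma>2 \<delta> :: real and \<beta> :: "nat \<Rightarrow> real" and S :: "nat set"
  assumes "n1 \<ge> 1" and "n2 \<ge> 1"
    and "0 < \<sigma>1\<^sup>2" and "\<sigma>1\<^sup>2 < \<sigma>2\<^sup>2"
    and "\<forall>j<p. \<beta> j \<in> {0, 1}"
    and "card (supp p \<beta>) = s"
    and "0 < \<delta>" and "\<delta> < 1"
    and "S \<subseteq> {0..<p}" and "card S = s"
    and "real (card ((S - supp p \<beta>) \<union> (supp p \<beta> - S))) / 2 \<ge> \<delta> * real s"
  shows "measure (gauss_model (n1 + n2) p)
           {\<omega> \<in> space (gauss_model (n1 + n2) p).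
              resid (n1 + n2) p (Yvec n1 p \<sigma>1 \<sigma>2 \<beta> \<omega>) \<omega> (ind S)
              - resid (n1 + n2) p (Yvec n1 p \<sigma>1 \<sigma>2 \<beta> \<omega>) \<omega> (ind (supp p \<beta>)) \<le> 0}
         \<le> (1 + \<delta> * (2 * \<sigma>2\<^sup>2 - \<sigma>1\<^sup>2) * real s / (2 * \<sigma>2 ^ 4)) powr (- (real n1 / 2))
           * (1 + \<delta> * real s / (2 * \<sigma>2\<^sup>2)) powr (- (real n2 / 2))"
proof -
  define \<sigma> where "\<sigma> i = (if i < n1 then \<sigma>1 else \<sigma>2)" for i
  define t where "t = 1 / (4 * \<sigma>2\<^sup>2)"
  define a where "a = real (card (sym_diff S (supp p \<beta>)))"
  define F where "F q = 1 / sqrt (1 + 2 * (t - 2 * t\<^sup>2 * q) * a)" for q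
  have \<sigma>2: "0 < \<sigma>2\<^sup>2" "\<sigma>1\<^sup>2 \<le> 2 * \<sigma>2\<^sup>2" "\<sigma>2\<^sup>2 \<le> 2 * \<sigma>2\<^sup>2"
    using assms(3,4) by linarith+
  have rate_nonneg: "0 \<le> t - 2 * t\<^sup>2 * q" if "q \<le> \<sigma>2\<^sup>2" for q
    using \<sigma>2(1) that by (simp add: t_def field_simps power2_eq_square)
  have norm: "(\<Sum>j<p. (ind (supp p \<beta>) j - ind S j)\<^sup>2) = a"
    unfolding a_def using assms(9) by (subst sum_ind_diff_square) (auto simp: supp_def Un_commute)
  have "measure (gauss_model (n1 + n2) p)
      {\<omega> \<in> space (gauss_model (n1 + n2) p).
         resid (n1 + n2) p (Yvec n1 p \<sigma>1 \<sigma>2 \<beta> \<omega>) \<omega> (ind S)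
         - resid (n1 + n2) p (Yvec n1 p \<sigma>1 \<sigma>2 \<beta> \<omega>) \<omega> (ind (supp p \<beta>)) \<le> 0}
      \<le> (\<Prod>i<n1 + n2. F ((\<sigma> i)\<^sup>2))"
    unfolding resid_Yvec_diff_eq[OF assms(5)] Zvec_def \<sigma>_def[symmetric] F_def norm[symmetric]
    using \<sigma>2 assms(4) by (intro measure_gauss_model_residual_gap_le rate_nonneg) (simp_all add: t_def \<sigma>_def)
  also have "\<dots> = F (\<sigma>1\<^sup>2) ^ n1 * F (\<sigma>2\<^sup>2) ^ n2"
    unfolding \<sigma>_def if_distrib[of "\<lambda>x. F (x\<^sup>2)"] by (rule prod_lessThan_add_if)
  also have "\<dots> \<le> (1 + \<delta> * (2 * \<sigma>2\<^sup>2 - \<sigma>1\<^sup>2) * real s / (2 * \<sigma>2 ^ 4)) powr (- (real n1 / 2))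
      * (1 + \<delta> * (2 * \<sigma>2\<^sup>2 - \<sigma>2\<^sup>2) * real s / (2 * \<sigma>2 ^ 4)) powr (- (real n2 / 2))"
    using \<sigma>2 assms(7,11) rate_nonneg[of "\<sigma>2\<^sup>2"] unfolding F_def t_def a_def
    by (intro mult_mono chernoff_factor_le) simp_all
  also have "\<delta> * (2 * \<sigma>2\<^sup>2 - \<sigma>2\<^sup>2) * real s / (2 * \<sigma>2 ^ 4) = \<delta> * real s / (2 * \<sigma>2\<^sup>2)"
    using \<sigma>2(1) by (simp add: field_simps power2_eq_square power4_eq_xxxx)
  finally show ?thesis .
qed

end
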